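(* Let $k\ge 1$, $n\ge 100k$ and $3\le r\le 10k$ be integers. If $G\in\mathcal{G}^*_{n,r}$, then \[ \lambda(G)\le \lambda(T_{n-r+2,2}\circ K_{r-1}), \] with equality if and only if $G=T_{n-r+2,2}\circ K_{r-1}$ (up to isomorphism).
   Context: $\lambda(G)$ denotes the spectral radius of the adjacency matrix of $G$. $T_{m,2}$ denotes the complete bipartite graph on $m$ vertices with parts of sizes $\lfloor m/2\rfloor$ and $\lceil m/2\rceil$. $T_{n-r+2,2}\circ K_{r-1}$ is the $n$-vertex graph obtained by identifying a vertex of the complete graph $K_{r-1}$ with a vertex of the smaller part (of size $\lfloor (n-r+2)/2\rfloor$) of $T_{n-r+2,2}$. A graph $H$ is suspended on a graph $B$ if $H$ intersects $B$ in exactly one vertex. $\mathcal{G}^*_{n,r}$ is the family of $n$-vertex graphs obtained from a bipartite graph $B$ by suspending graphs $G_1,\dots,G_s$ on $B$ (for some $s\in\mathbb{N}$), i.e. the graph is $B\cup G_1\cup\dots\cup G_s$ with each $G_i$ meeting $B$ in exactly one vertex, where $\sum_{i=1}^s|V(G_i)\setminus V(B)|= r-2$. *)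

theory Defs
  imports Jordan_Normal_Form.Spectral_Radius
begin

definition graph_on :: "nat set \<Rightarrow> nat set set \<Rightarrow> bool" where
  "graph_on V E \<longleftrightarrow> finite V \<and>
     (\<forall>e\<in>E. \<exists>u v. e = {u, v} \<and> u \<noteq> v \<and> u \<in> V \<and> v \<in> V)"

definition bipartite :: "nat set \<Rightarrow> nat set set \<Rightarrow> bool" where
  "bipartite V E \<longleftrightarrow> (\<exists>X. X \<subseteq> V \<and> (\<forall>e\<in>E. card (e \<inter> X) = 1))"

definition adj_mat :: "nat \<Rightarrow> nat set set \<Rightarrow> complex mat" where
  "adj_mat n E = mat n n (\<lambda>(i, j). if {i, j} \<in> E then 1 else 0)"

definition lambda_G :: "nat \<Rightarrow> nat set set \<Rightarrow> real" where
  "lambda_G n E = spectral_radius (adj_mat n E)"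

definition graph_iso :: "nat \<Rightarrow> nat set set \<Rightarrow> nat set set \<Rightarrow> bool" where
  "graph_iso n E F \<longleftrightarrow> (\<exists>f. bij_betw f {0..<n} {0..<n} \<and>
     (\<forall>u\<in>{0..<n}. \<forall>v\<in>{0..<n}. {u, v} \<in> E \<longleftrightarrow> {f u, f v} \<in> F))"

text \<open>T_{n-r+2,2} o K_{r-1} on vertex set {0..<n}: with m = n-r+2, the smaller
  part is {0..<m div 2}, the larger part {m div 2..<m}; the clique K_{r-1}
  is on {0} \<union> {m..<n} (vertex 0 lies in the smaller part).\<close>
definition TK :: "nat \<Rightarrow> nat \<Rightarrow> nat set set" where
  "TK n r = (let m = n - r + 2; a = m div 2 in
     {{x, y} | x y. x < a \<and> a \<le> y \<and> y < m} \<union>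
     {{x, y} | x y. x \<in> insert 0 {m..<n} \<and> y \<in> insert 0 {m..<n} \<and> x \<noteq> y})"

definition G_star :: "nat \<Rightarrow> nat \<Rightarrow> nat set set \<Rightarrow> bool" where
  "G_star n r E \<longleftrightarrow> graph_on {0..<n} E \<and>
     (\<exists>VB EB (s::nat) (VG :: nat \<Rightarrow> nat set) (EG :: nat \<Rightarrow> nat set set).
        graph_on VB EB \<and> bipartite VB EB \<and>
        (\<forall>i<s. graph_on (VG i) (EG i) \<and> card (VG i \<inter> VB) = 1) \<and>
        (\<forall>i<s. \<forall>j<s. i \<noteq> j \<longrightarrow> (VG i - VB) \<inter> (VG j - VB) = {}) \<and>
        {0..<n} = VB \<union> (\<Union>i<s. VG i) \<and>
        E = EB \<union> (\<Union>i<s. EG i) \<and>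
        (\<Sum>i<s. card (VG i - VB)) = r - 2)"

end

theory Submission
  imports Defs
begin

text \<open>
  Every graph in \<open>G_star n r\<close> is a subgraph of a host graph: the complete bipartite graph between
  the colour classes \<open>P\<close>, \<open>Q\<close> of \<open>B\<close>, in which every vertex \<open>c\<close> outside \<open>B\<close> is joined to the
  vertex \<open>\<rho> c\<close> of \<open>B\<close> carrying its suspended graph, and the vertices with a common root form a
  clique. Put \<open>t = r - 2\<close>, \<open>m = a + b = n - t\<close> with \<open>a = m div 2\<close>, \<open>\<epsilon>(s) = s / (l - s)\<close>, and
  let \<open>l\<close> be the root of \<open>l\<^sup>2 = a b + b \<epsilon>(t) / (l + 1)\<close>; it is the spectral radius of \<open>TK n r\<close>.

  On a host graph, weights that solve the eigen-equations on every pendant clique give a positive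
  vector \<open>y\<close> with \<open>A y \<le> l y\<close> as soon as \<open>F\<^sub>P F\<^sub>Q \<le> 1\<close>, where
  \<open>F\<^sub>S = (\<Sum>v\<in>S. (1 + \<epsilon>(t\<^sub>v) / (l + 1)) / l)\<close> and \<open>t\<^sub>v\<close> is the number of pendants at \<open>v\<close>.
  A Collatz--Wielandt argument then bounds the spectral radius of every subgraph by \<open>l\<close>, with
  equality only if \<open>F\<^sub>P F\<^sub>Q = 1\<close> and the subgraph is the whole host graph. Since \<open>\<epsilon>\<close> is
  superadditive and \<open>|P| |Q| \<le> a b\<close>, we get \<open>F\<^sub>P F\<^sub>Q \<le> 1\<close>, with equality only if one class
  has \<open>a\<close> vertices and carries all \<open>t\<close> pendants at a single vertex, i.e. only for \<open>TK n r\<close>.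
\<close>

section \<open>Spectral radius of adjacency matrices\<close>

definition neighbors :: "nat \<Rightarrow> nat set set \<Rightarrow> nat \<Rightarrow> nat set" where
  "neighbors n E i = {j. j < n \<and> {i, j} \<in> E}"

lemma finite_neighbors [simp]: "finite (neighbors n E i)"
  unfolding neighbors_def by auto

lemma neighbors_mono: "E \<subseteq> F \<Longrightarrow> neighbors n E i \<subseteq> neighbors n F i"
  unfolding neighbors_def by auto

lemma adj_mat_carrier: "adj_mat n E \<in> carrier_mat n n"
  unfolding adj_mat_def by auto

lemma adj_mat_mult_vec_nth:
  assumes "i < n" "v \<in> carrier_vec n"
  shows "(adj_mat n E *\<^sub>v v) $ i = (\<Sum>j\<in>neighbors n E i. v $ j)"
proof -
  have "(adj_mat n E *\<^sub>v v) $ i = (\<Sum>j\<in>{0..<n}. (if {i, j} \<in> E then 1 else 0) * v $ j)"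
    using assms by (simp add: adj_mat_def scalar_prod_def)
  also have "\<dots> = (\<Sum>j\<in>{0..<n}. if {i, j} \<in> E then v $ j else 0)"
    by (rule sum.cong) auto
  also have "\<dots> = (\<Sum>j\<in>neighbors n E i. v $ j)"
    unfolding neighbors_def by (simp add: sum.inter_filter[symmetric])
  finally show ?thesis .
qed

lemma spectrum_adj_mat_iff:
  "ev \<in> spectrum (adj_mat n E) \<longleftrightarrow>
     (\<exists>v \<in> carrier_vec n. v \<noteq> 0\<^sub>v n \<and> (\<forall>i<n. (\<Sum>j\<in>neighbors n E i. v $ j) = ev * v $ i))"
proof -
  have "adj_mat n E *\<^sub>v v = ev \<cdot>\<^sub>v v \<longleftrightarrow> (\<forall>i<n. (\<Sum>j\<in>neighbors n E i. v $ j) = ev * v $ i)"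
    if v: "v \<in> carrier_vec n" for v
  proof -
    have "adj_mat n E *\<^sub>v v = ev \<cdot>\<^sub>v v \<longleftrightarrow> (\<forall>i<n. (adj_mat n E *\<^sub>v v) $ i = ev * v $ i)"
      using v adj_mat_carrier[of n E] by (auto simp: vec_eq_iff)
    then show ?thesis
      using v by (simp add: adj_mat_mult_vec_nth)
  qed
  then show ?thesis
    unfolding spectrum_def eigenvalue_def eigenvector_def
    using adj_mat_carrier[of n E] by auto
qed

lemma lambda_G_in_spectrum:
  assumes "0 < n"
  obtains ev where "ev \<in> spectrum (adj_mat n E)" "cmod ev = lambda_G n E"
  using spectral_radius_mem_max(1)[OF adj_mat_carrier[of n E] assms] unfolding lambda_G_def by auto

lemma spectrum_le_lambda_G:
  assumes "ev \<in> spectrum (adj_mat n E)"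
  shows "cmod ev \<le> lambda_G n E"
proof -
  have "0 < n"
    using assms adj_mat_carrier by (auto simp: spectrum_def intro: eigenvalue_imp_nonzero_dim)
  then show ?thesis
    using assms spectral_radius_mem_max(2)[OF adj_mat_carrier] unfolding lambda_G_def by blast
qed

text \<open>Taking moduli of an eigenvector for an eigenvalue of maximal modulus.\<close>
lemma exists_nonneg_subeigenvector:
  assumes "0 < n"
  obtains x :: "nat \<Rightarrow> real" where "\<And>j. 0 \<le> x j" "\<exists>j<n. 0 < x j"
    "\<And>i. i < n \<Longrightarrow> lambda_G n E * x i \<le> (\<Sum>j\<in>neighbors n E i. x j)"
proof -
  obtain ev where ev: "ev \<in> spectrum (adj_mat n E)" "cmod ev = lambda_G n E"
    using lambda_G_in_spectrum[OF assms] .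
  then obtain v where v: "v \<in> carrier_vec n" "v \<noteq> 0\<^sub>v n"
    and rows: "\<And>i. i < n \<Longrightarrow> (\<Sum>j\<in>neighbors n E i. v $ j) = ev * v $ i"
    unfolding spectrum_adj_mat_iff by blast
  have "\<exists>j<n. 0 < cmod (v $ j)"
    using v by (auto simp: vec_eq_iff)
  moreover have "lambda_G n E * cmod (v $ i) \<le> (\<Sum>j\<in>neighbors n E i. cmod (v $ j))" if "i < n" for i
  proof -
    have "lambda_G n E * cmod (v $ i) = cmod (\<Sum>j\<in>neighbors n E i. v $ j)"
      using rows[OF that] ev(2) by (simp add: norm_mult)
    also have "\<dots> \<le> (\<Sum>j\<in>neighbors n E i. cmod (v $ j))"
      by (rule norm_sum)
    finally show ?thesis .
  qed
  ultimately show thesis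
    by (intro that[of "\<lambda>j. cmod (v $ j)"]) auto
qed

lemma lambda_G_ge_eigenvalue:
  fixes y :: "nat \<Rightarrow> real"
  assumes "i0 < n" "y i0 \<noteq> 0" "0 \<le> \<mu>"
    and "\<And>i. i < n \<Longrightarrow> (\<Sum>j\<in>neighbors n E i. y j) = \<mu> * y i"
  shows "\<mu> \<le> lambda_G n E"
proof -
  let ?v = "vec n (\<lambda>j. complex_of_real (y j))"
  have "?v \<noteq> 0\<^sub>v n"
    using assms(1,2) by (auto simp: vec_eq_iff)
  moreover have "(\<Sum>j\<in>neighbors n E i. ?v $ j) = complex_of_real \<mu> * ?v $ i" if "i < n" for i
  proof -
    have "(\<Sum>j\<in>neighbors n E i. ?v $ j) = (\<Sum>j\<in>neighbors n E i. complex_of_real (y j))"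
      by (rule sum.cong) (auto simp: neighbors_def)
    also have "\<dots> = complex_of_real (\<Sum>j\<in>neighbors n E i. y j)"
      by simp
    finally show ?thesis
      using assms(4)[OF that] that by simp
  qed
  ultimately have "complex_of_real \<mu> \<in> spectrum (adj_mat n E)"
    unfolding spectrum_adj_mat_iff by (intro bexI[of _ ?v]) auto
  then show ?thesis
    using spectrum_le_lambda_G assms(3) by fastforce
qed

lemma lambda_G_le_of_graph_iso:
  assumes "0 < n" "graph_iso n E F"
  shows "lambda_G n F \<le> lambda_G n E"
proof -
  obtain f where f: "bij_betw f {0..<n} {0..<n}"
    and fE: "\<And>u v. u < n \<Longrightarrow> v < n \<Longrightarrow> {u, v} \<in> E \<longleftrightarrow> {f u, f v} \<in> F"
    using assms(2) unfolding graph_iso_def by auto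
  have neighbors_image: "neighbors n F (f i) = f ` neighbors n E i" if "i < n" for i
  proof -
    have "neighbors n F (f i) = {j \<in> f ` {0..<n}. {f i, j} \<in> F}"
      using f unfolding neighbors_def bij_betw_def by auto
    also have "\<dots> = f ` neighbors n E i"
      using fE[OF that] unfolding neighbors_def by auto
    finally show ?thesis .
  qed
  obtain ev where ev: "ev \<in> spectrum (adj_mat n F)" "cmod ev = lambda_G n F"
    using lambda_G_in_spectrum[OF assms(1)] .
  then obtain v where v: "v \<in> carrier_vec n" "v \<noteq> 0\<^sub>v n"
    and rows: "\<And>i. i < n \<Longrightarrow> (\<Sum>j\<in>neighbors n F i. v $ j) = ev * v $ i"
    unfolding spectrum_adj_mat_iff by blast
  let ?w = "vec n (\<lambda>j. v $ f j)"
  have "?w \<noteq> 0\<^sub>v n"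
  proof -
    obtain i where "i < n" "v $ i \<noteq> 0"
      using v by (auto simp: vec_eq_iff)
    moreover have "i \<in> f ` {0..<n}"
      using f \<open>i < n\<close> by (simp add: bij_betw_def)
    then obtain j where "j < n" "f j = i"
      by auto
    ultimately show ?thesis
      by (auto simp: vec_eq_iff)
  qed
  moreover have "(\<Sum>j\<in>neighbors n E i. ?w $ j) = ev * ?w $ i" if i: "i < n" for i
  proof -
    have inj: "inj_on f (neighbors n E i)"
      using f unfolding bij_betw_def neighbors_def by (auto intro: inj_on_subset)
    have "(\<Sum>j\<in>neighbors n E i. ?w $ j) = (\<Sum>j\<in>neighbors n E i. v $ f j)"
      by (rule sum.cong) (auto simp: neighbors_def)
    also have "\<dots> = (\<Sum>j\<in>neighbors n F (f i). v $ j)"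
      unfolding neighbors_image[OF i] sum.reindex[OF inj] by simp
    also have "\<dots> = ev * ?w $ i"
    proof -
      have "f i < n"
        using f i by (auto simp: bij_betw_def)
      then show ?thesis
        using rows i by simp
    qed
    finally show ?thesis .
  qed
  ultimately have "ev \<in> spectrum (adj_mat n E)"
    unfolding spectrum_adj_mat_iff by (intro bexI[of _ ?w]) auto
  then show ?thesis
    using ev(2) spectrum_le_lambda_G by fastforce
qed

text \<open>\<open>M\<close> is where \<open>x / y\<close> is maximal, for a nonnegative subeigenvector \<open>x\<close> of the
  spectral radius.\<close>
lemma subsolution_argmax_set:
  fixes y :: "nat \<Rightarrow> real"
  assumes "0 < n" and y_pos: "\<And>i. i < n \<Longrightarrow> 0 < y i"
  obtains M where "M \<noteq> {}" "M \<subseteq> {0..<n}"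
    and "\<And>i. i \<in> M \<Longrightarrow> lambda_G n E * y i \<le> (\<Sum>j\<in>neighbors n E i. y j)"
    and "\<And>i. i \<in> M \<Longrightarrow> lambda_G n E * y i = (\<Sum>j\<in>neighbors n E i. y j) \<Longrightarrow> neighbors n E i \<subseteq> M"
proof -
  let ?lam = "lambda_G n E"
  obtain x where x_nonneg: "\<And>j. 0 \<le> x j" and x_pos: "\<exists>j<n. 0 < x j"
    and sub: "\<And>i. i < n \<Longrightarrow> ?lam * x i \<le> (\<Sum>j\<in>neighbors n E i. x j)"
    using exists_nonneg_subeigenvector[OF \<open>0 < n\<close>] by blast
  define R where "R = Max ((\<lambda>j. x j / y j) ` {0..<n})"
  define M where "M = {i. i < n \<and> x i = R * y i}"
  have nbr_lt: "j < n" if "j \<in> neighbors n E i" for i j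
    using that unfolding neighbors_def by simp
  have ratio_le: "x j / y j \<le> R" if "j < n" for j
    unfolding R_def using that by (intro Max_ge) auto
  have x_le: "x j \<le> R * y j" if "j < n" for j
    using ratio_le[OF that] y_pos[OF that] by (simp add: pos_divide_le_eq mult.commute)
  have "0 < R"
  proof -
    obtain j where "j < n" "0 < x j"
      using x_pos by blast
    then show ?thesis
      using ratio_le[of j] y_pos[of j] by (smt (verit) divide_pos_pos)
  qed
  have "R \<in> (\<lambda>j. x j / y j) ` {0..<n}"
    unfolding R_def using \<open>0 < n\<close> by (intro Max_in) auto
  then obtain j where "j < n" "R = x j / y j"
    by auto
  then have "j \<in> M"
    unfolding M_def using y_pos[of j] by simp
  have chain: "?lam * (R * y i) \<le> (\<Sum>j\<in>neighbors n E i. x j)"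
    "(\<Sum>j\<in>neighbors n E i. x j) \<le> R * (\<Sum>j\<in>neighbors n E i. y j)"
    if "i \<in> M" for i
  proof -
    have "i < n" "x i = R * y i"
      using that unfolding M_def by auto
    then show "?lam * (R * y i) \<le> (\<Sum>j\<in>neighbors n E i. x j)"
      using sub[of i] by simp
    have "(\<Sum>j\<in>neighbors n E i. x j) \<le> (\<Sum>j\<in>neighbors n E i. R * y j)"
      using x_le nbr_lt by (intro sum_mono) blast
    then show "(\<Sum>j\<in>neighbors n E i. x j) \<le> R * (\<Sum>j\<in>neighbors n E i. y j)"
      by (simp add: sum_distrib_left)
  qed
  show thesis
  proof (rule that)
    show "M \<noteq> {}" "M \<subseteq> {0..<n}"
      using \<open>j \<in> M\<close> unfolding M_def by auto
    show "?lam * y i \<le> (\<Sum>j\<in>neighbors n E i. y j)" if "i \<in> M" for i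
    proof -
      have "R * (?lam * y i) \<le> R * (\<Sum>j\<in>neighbors n E i. y j)"
        using chain[OF that] by (simp add: mult.left_commute)
      then show ?thesis
        using \<open>0 < R\<close> by simp
    qed
    show "neighbors n E i \<subseteq> M" if "i \<in> M" and tight: "?lam * y i = (\<Sum>j\<in>neighbors n E i. y j)" for i
    proof
      fix j assume j: "j \<in> neighbors n E i"
      have "(\<Sum>j\<in>neighbors n E i. x j) = (\<Sum>j\<in>neighbors n E i. R * y j)"
        using chain[OF \<open>i \<in> M\<close>] tight by (simp add: sum_distrib_left mult.left_commute)
      moreover have "(\<Sum>j\<in>neighbors n E i. x j) < (\<Sum>j\<in>neighbors n E i. R * y j)"
        if "x j < R * y j"
        using x_le nbr_lt j that by (intro sum_strict_mono_ex1) auto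
      ultimately have "x j = R * y j"
        using x_le[OF nbr_lt[OF j]] by linarith
      then show "j \<in> M"
        unfolding M_def using nbr_lt[OF j] by simp
    qed
  qed
qed

lemma lambda_G_le_of_supersolution:
  fixes y :: "nat \<Rightarrow> real"
  assumes "0 < n" "EG \<subseteq> EH" "\<And>i. i < n \<Longrightarrow> 0 < y i"
    and rows: "\<And>i. i < n \<Longrightarrow> (\<Sum>j\<in>neighbors n EH i. y j) \<le> \<mu> * y i"
  shows "lambda_G n EG \<le> \<mu>"
proof -
  obtain M where "M \<noteq> {}" "M \<subseteq> {0..<n}"
    and sub: "\<And>i. i \<in> M \<Longrightarrow> lambda_G n EG * y i \<le> (\<Sum>j\<in>neighbors n EG i. y j)"
    and "\<And>i. i \<in> M \<Longrightarrow> lambda_G n EG * y i = (\<Sum>j\<in>neighbors n EG i. y j) \<Longrightarrow> neighbors n EG i \<subseteq> M"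
    using subsolution_argmax_set[where y = y and E = EG, OF assms(1,3)] by blast
  obtain i where "i \<in> M"
    using \<open>M \<noteq> {}\<close> by blast
  then have "i < n"
    using \<open>M \<subseteq> {0..<n}\<close> by auto
  have "(\<Sum>j\<in>neighbors n EG i. y j) \<le> (\<Sum>j\<in>neighbors n EH i. y j)"
    using neighbors_mono[OF \<open>EG \<subseteq> EH\<close>] assms(3) by (intro sum_mono2) (auto simp: neighbors_def less_imp_le)
  then have "lambda_G n EG * y i \<le> \<mu> * y i"
    using sub[OF \<open>i \<in> M\<close>] rows[OF \<open>i < n\<close>] by linarith
  then show ?thesis
    using assms(3)[OF \<open>i < n\<close>] by simp
qed

lemma tight_set_of_supersolution:
  fixes y :: "nat \<Rightarrow> real"
  assumes "0 < n" "EG \<subseteq> EH" "\<And>i. i < n \<Longrightarrow> 0 < y i"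
    and rows: "\<And>i. i < n \<Longrightarrow> (\<Sum>j\<in>neighbors n EH i. y j) \<le> \<mu> * y i"
    and "lambda_G n EG = \<mu>"
  obtains M where "M \<noteq> {}" "M \<subseteq> {0..<n}"
    and "\<And>i. i \<in> M \<Longrightarrow> (\<Sum>j\<in>neighbors n EH i. y j) = \<mu> * y i"
    and "\<And>i. i \<in> M \<Longrightarrow> neighbors n EH i \<subseteq> M"
    and "\<And>i. i \<in> M \<Longrightarrow> neighbors n EH i \<subseteq> neighbors n EG i"
proof -
  obtain M where M: "M \<noteq> {}" "M \<subseteq> {0..<n}"
    and sub: "\<And>i. i \<in> M \<Longrightarrow> lambda_G n EG * y i \<le> (\<Sum>j\<in>neighbors n EG i. y j)"
    and closed: "\<And>i. i \<in> M \<Longrightarrow> lambda_G n EG * y i = (\<Sum>j\<in>neighbors n EG i. y j) \<Longrightarrow>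
      neighbors n EG i \<subseteq> M"
    using subsolution_argmax_set[where y = y and E = EG, OF assms(1,3)] by blast
  have y_nonneg: "0 \<le> y j" if "j \<in> neighbors n EH i" for i j
    using that assms(3) by (auto simp: neighbors_def less_imp_le)
  have sum_le: "(\<Sum>j\<in>neighbors n EG i. y j) \<le> (\<Sum>j\<in>neighbors n EH i. y j)" for i
    using neighbors_mono[OF \<open>EG \<subseteq> EH\<close>] y_nonneg by (intro sum_mono2) auto
  have tight: "(\<Sum>j\<in>neighbors n EG i. y j) = \<mu> * y i" "(\<Sum>j\<in>neighbors n EH i. y j) = \<mu> * y i"
    if "i \<in> M" for i
  proof -
    have "i < n"
      using that M(2) by auto
    then show "(\<Sum>j\<in>neighbors n EG i. y j) = \<mu> * y i" "(\<Sum>j\<in>neighbors n EH i. y j) = \<mu> * y i"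
      using sub[OF that, unfolded \<open>lambda_G n EG = \<mu>\<close>] sum_le[of i] rows[OF \<open>i < n\<close>] by linarith+
  qed
  have agree: "neighbors n EH i \<subseteq> neighbors n EG i" if "i \<in> M" for i
  proof
    fix j assume j: "j \<in> neighbors n EH i"
    show "j \<in> neighbors n EG i"
    proof (rule ccontr)
      assume "j \<notin> neighbors n EG i"
      then have "(\<Sum>j\<in>neighbors n EG i. y j) < (\<Sum>j\<in>neighbors n EH i. y j)"
        using j neighbors_mono[OF \<open>EG \<subseteq> EH\<close>] y_nonneg assms(3)
        by (intro sum_strict_mono2) (auto simp: neighbors_def)
      then show False
        using tight[OF that] by simp
    qed
  qed
  show thesis
  proof (rule that[OF M])
    fix i assume "i \<in> M"
    show "(\<Sum>j\<in>neighbors n EH i. y j) = \<mu> * y i"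
      using tight(2)[OF \<open>i \<in> M\<close>] .
    show "neighbors n EH i \<subseteq> neighbors n EG i"
      using agree[OF \<open>i \<in> M\<close>] .
    then show "neighbors n EH i \<subseteq> M"
      using closed[OF \<open>i \<in> M\<close>] tight(1)[OF \<open>i \<in> M\<close>] \<open>lambda_G n EG = \<mu>\<close> by simp
  qed
qed

section \<open>Host graphs\<close>

definition host_edges :: "nat set \<Rightarrow> nat set \<Rightarrow> nat set \<Rightarrow> (nat \<Rightarrow> nat) \<Rightarrow> nat set set" where
  "host_edges P Q K \<rho> = {{x, y} | x y. x \<in> P \<and> y \<in> Q} \<union> {{\<rho> c, c} | c. c \<in> K} \<union>
     {{c, d} | c d. c \<in> K \<and> d \<in> K \<and> \<rho> c = \<rho> d \<and> c \<noteq> d}"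

definition pendants :: "nat set \<Rightarrow> (nat \<Rightarrow> nat) \<Rightarrow> nat \<Rightarrow> nat set" where
  "pendants K \<rho> v = {c \<in> K. \<rho> c = v}"

lemma mem_host_edges_iff:
  "{x, y} \<in> host_edges P Q K \<rho> \<longleftrightarrow> (x \<in> P \<and> y \<in> Q) \<or> (x \<in> Q \<and> y \<in> P) \<or>
     (x \<in> K \<and> y = \<rho> x) \<or> (y \<in> K \<and> x = \<rho> y) \<or> (x \<in> K \<and> y \<in> K \<and> \<rho> x = \<rho> y \<and> x \<noteq> y)"
  unfolding host_edges_def by (auto simp: doubleton_eq_iff)

lemma host_edges_swap: "host_edges Q P K \<rho> = host_edges P Q K \<rho>"
  unfolding host_edges_def by (auto simp: insert_commute)

locale host_graph =
  fixes n :: nat and P Q K :: "nat set" and \<rho> :: "nat \<Rightarrow> nat"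
  assumes disjoint_PQ: "P \<inter> Q = {}" and disjoint_PK: "P \<inter> K = {}" and disjoint_QK: "Q \<inter> K = {}"
    and parts_cover: "P \<union> Q \<union> K = {0..<n}"
    and root_in_parts: "\<And>c. c \<in> K \<Longrightarrow> \<rho> c \<in> P \<union> Q"

lemma host_graph_swap: "host_graph n P Q K \<rho> \<Longrightarrow> host_graph n Q P K \<rho>"
  unfolding host_graph_def by blast

context host_graph
begin

lemma finite_parts: "finite P" "finite Q" "finite K"
  using parts_cover by (metis finite_Un finite_atLeastLessThan)+

lemma neighbors_root_P:
  assumes "v \<in> P"
  shows "neighbors n (host_edges P Q K \<rho>) v = Q \<union> pendants K \<rho> v"
  using assms disjoint_PQ disjoint_PK disjoint_QK parts_cover root_in_parts
  unfolding neighbors_def pendants_def mem_host_edges_iff by auto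

lemma neighbors_root_Q:
  assumes "v \<in> Q"
  shows "neighbors n (host_edges P Q K \<rho>) v = P \<union> pendants K \<rho> v"
  using assms disjoint_PQ disjoint_PK disjoint_QK parts_cover root_in_parts
  unfolding neighbors_def pendants_def mem_host_edges_iff by auto

lemma neighbors_pendant:
  assumes "c \<in> K"
  shows "neighbors n (host_edges P Q K \<rho>) c = insert (\<rho> c) (pendants K \<rho> (\<rho> c) - {c})"
proof -
  have "\<rho> d \<notin> K" if "d \<in> K" for d
    using root_in_parts[OF that] disjoint_PK disjoint_QK by blast
  moreover have "\<rho> c < n" "c \<notin> P" "c \<notin> Q"
    using assms root_in_parts[OF assms] parts_cover disjoint_PK disjoint_QK by auto
  ultimately show ?thesis
    using assms parts_cover unfolding neighbors_def pendants_def mem_host_edges_iff by auto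
qed

lemma host_edges_vertices:
  assumes "e \<in> host_edges P Q K \<rho>"
  obtains x y where "e = {x, y}" "x < n" "y < n"
proof -
  obtain x y where "e = {x, y}" "x \<in> P \<union> Q \<union> K" "y \<in> P \<union> Q \<union> K"
    using assms root_in_parts unfolding host_edges_def by blast
  then show thesis
    using that parts_cover by auto
qed

lemma card_pendants_le: "card (pendants K \<rho> v) \<le> card K"
  unfolding pendants_def using finite_parts by (intro card_mono) auto

lemma sum_card_pendants:
  "(\<Sum>v\<in>P. card (pendants K \<rho> v)) + (\<Sum>v\<in>Q. card (pendants K \<rho> v)) = card K"
proof -
  have "(\<Sum>v\<in>P \<union> Q. card (pendants K \<rho> v)) = (\<Sum>v\<in>P \<union> Q. \<Sum>c\<in>{c\<in>K. \<rho> c = v}. 1::nat)"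
    unfolding pendants_def by simp
  also have "\<dots> = card K"
    using finite_parts root_in_parts by (subst sum.group) auto
  finally show ?thesis
    using disjoint_PQ finite_parts by (simp add: sum.union_disjoint)
qed

lemma card_parts: "card P + card Q + card K = n"
proof -
  have "(P \<union> Q) \<inter> K = {}"
    using disjoint_PK disjoint_QK by blast
  then have "card (P \<union> Q \<union> K) = card P + card Q + card K"
    using finite_parts disjoint_PQ by (simp add: card_Un_disjoint)
  then show ?thesis
    using parts_cover by simp
qed

lemma closed_set_meets_roots:
  assumes "M \<noteq> {}" "M \<subseteq> {0..<n}"
    and closed: "\<And>i. i \<in> M \<Longrightarrow> neighbors n (host_edges P Q K \<rho>) i \<subseteq> M"
  obtains j where "j \<in> M" "j \<in> P \<union> Q"
proof -
  obtain i where i: "i \<in> M"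
    using assms(1) by blast
  show thesis
  proof (cases "i \<in> K")
    case True
    then have "\<rho> i \<in> M"
      using closed[OF i] unfolding neighbors_pendant[OF True] by blast
    then show thesis
      using that root_in_parts[OF True] by blast
  next
    case False
    then show thesis
      using that i assms(2) parts_cover by blast
  qed
qed

lemma closed_set_eq_vertices:
  assumes "M \<noteq> {}" "M \<subseteq> {0..<n}" "P \<noteq> {}" "Q \<noteq> {}"
    and closed: "\<And>i. i \<in> M \<Longrightarrow> neighbors n (host_edges P Q K \<rho>) i \<subseteq> M"
  shows "M = {0..<n}"
proof -
  obtain j where j: "j \<in> M" "j \<in> P \<union> Q"
    using closed_set_meets_roots[OF assms(1,2) closed] by blast
  obtain p q where "p \<in> P" "q \<in> Q"
    using assms(3,4) by blast
  have "P \<union> Q \<subseteq> M"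
  proof (cases "j \<in> P")
    case True
    then have "Q \<subseteq> M"
      using closed[OF j(1)] unfolding neighbors_root_P[OF True] by blast
    then show ?thesis
      using closed[of q] \<open>q \<in> Q\<close> unfolding neighbors_root_Q[OF \<open>q \<in> Q\<close>] by blast
  next
    case False
    then have "j \<in> Q"
      using j(2) by blast
    then have "P \<subseteq> M"
      using closed[OF j(1)] unfolding neighbors_root_Q[OF \<open>j \<in> Q\<close>] by blast
    then show ?thesis
      using closed[of p] \<open>p \<in> P\<close> unfolding neighbors_root_P[OF \<open>p \<in> P\<close>] by blast
  qed
  moreover have "K \<subseteq> M"
  proof
    fix c assume "c \<in> K"
    then have "c \<in> pendants K \<rho> (\<rho> c)" "\<rho> c \<in> P \<union> Q"
      using root_in_parts by (auto simp: pendants_def)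
    then have "c \<in> neighbors n (host_edges P Q K \<rho>) (\<rho> c)"
      using neighbors_root_P neighbors_root_Q by blast
    then show "c \<in> M"
      using closed \<open>\<rho> c \<in> P \<union> Q\<close> \<open>P \<union> Q \<subseteq> M\<close> by blast
  qed
  ultimately show ?thesis
    using assms(2) parts_cover by blast
qed

lemma mem_host_edges_single_root_iff:
  assumes "\<And>c. c \<in> K \<Longrightarrow> \<rho> c = v"
  shows "{x, y} \<in> host_edges P Q K \<rho> \<longleftrightarrow> (x \<in> P \<and> y \<in> Q) \<or> (x \<in> Q \<and> y \<in> P) \<or>
    (x \<in> K \<and> y = v) \<or> (y \<in> K \<and> x = v) \<or> (x \<in> K \<and> y \<in> K \<and> x \<noteq> y)"
  using assms unfolding mem_host_edges_iff by auto

lemma graph_iso_single_root: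
  assumes "host_graph n P' Q' K' \<rho>'" and "v \<in> P" "v' \<in> P'"
    and root: "\<And>c. c \<in> K \<Longrightarrow> \<rho> c = v" and root': "\<And>c. c \<in> K' \<Longrightarrow> \<rho>' c = v'"
    and "card P = card P'" "card Q = card Q'" "card K = card K'"
  shows "graph_iso n (host_edges P Q K \<rho>) (host_edges P' Q' K' \<rho>')"
proof -
  interpret H': host_graph n P' Q' K' \<rho>'
    by fact
  obtain g1 where g1: "bij_betw g1 (P - {v}) (P' - {v'})"
    using finite_same_card_bij[of "P - {v}" "P' - {v'}"] finite_parts H'.finite_parts assms by auto
  obtain g2 where g2: "bij_betw g2 Q Q'"
    using finite_same_card_bij finite_parts H'.finite_parts assms by metis
  obtain g3 where g3: "bij_betw g3 K K'"
    using finite_same_card_bij finite_parts H'.finite_parts assms by metis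
  define f1 where "f1 x = (if x \<in> {v} then v' else g1 x)" for x
  define f2 where "f2 x = (if x \<in> P then f1 x else g2 x)" for x
  define f where "f x = (if x \<in> P \<union> Q then f2 x else g3 x)" for x
  have "bij_betw f1 ({v} \<union> (P - {v})) ({v'} \<union> (P' - {v'}))"
    unfolding f1_def using g1 by (intro bij_betw_disjoint_Un) auto
  then have "bij_betw f1 P P'"
    using \<open>v \<in> P\<close> \<open>v' \<in> P'\<close> by (simp add: insert_absorb)
  then have "bij_betw f2 (P \<union> Q) (P' \<union> Q')"
    unfolding f2_def using g2 disjoint_PQ H'.disjoint_PQ by (intro bij_betw_disjoint_Un)
  then have "bij_betw f ((P \<union> Q) \<union> K) ((P' \<union> Q') \<union> K')"
    unfolding f_def using g3 disjoint_PK disjoint_QK H'.disjoint_PK H'.disjoint_QK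
    by (intro bij_betw_disjoint_Un) auto
  then have bij: "bij_betw f {0..<n} {0..<n}"
    using parts_cover H'.parts_cover by simp
  have images: "f ` P = P'" "f ` Q = Q'" "f ` K = K'" and "f v = v'"
    using \<open>bij_betw f1 P P'\<close> g2 g3 disjoint_PQ disjoint_PK disjoint_QK \<open>v \<in> P\<close>
    unfolding f_def f2_def f1_def bij_betw_def by (auto simp: image_iff)
  have inj: "inj_on f {0..<n}"
    using bij by (rule bij_betw_imp_inj_on)
  have parts: "P \<subseteq> {0..<n}" "Q \<subseteq> {0..<n}" "K \<subseteq> {0..<n}"
    using parts_cover by auto
  have mem_iff: "f x \<in> P' \<longleftrightarrow> x \<in> P" "f x \<in> Q' \<longleftrightarrow> x \<in> Q" "f x \<in> K' \<longleftrightarrow> x \<in> K"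
    "f x = v' \<longleftrightarrow> x = v" if "x < n" for x
  proof -
    have x: "x \<in> {0..<n}"
      using that by simp
    show "f x \<in> P' \<longleftrightarrow> x \<in> P" "f x \<in> Q' \<longleftrightarrow> x \<in> Q" "f x \<in> K' \<longleftrightarrow> x \<in> K"
      using inj_on_image_mem_iff[OF inj x] parts images by auto
    show "f x = v' \<longleftrightarrow> x = v"
      using inj_on_eq_iff[OF inj x, of v] \<open>f v = v'\<close> \<open>v \<in> P\<close> parts by auto
  qed
  have "{x, y} \<in> host_edges P Q K \<rho> \<longleftrightarrow> {f x, f y} \<in> host_edges P' Q' K' \<rho>'"
    if "x < n" "y < n" for x y
  proof -
    have "f x = f y \<longleftrightarrow> x = y"
      using inj_on_eq_iff[OF inj] that by auto
    moreover have "{x, y} \<in> host_edges P Q K \<rho> \<longleftrightarrow> (x \<in> P \<and> y \<in> Q) \<or> (x \<in> Q \<and> y \<in> P) \<or>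
        (x \<in> K \<and> y = v) \<or> (y \<in> K \<and> x = v) \<or> (x \<in> K \<and> y \<in> K \<and> x \<noteq> y)"
      by (rule mem_host_edges_single_root_iff[OF root])
    moreover have "{f x, f y} \<in> host_edges P' Q' K' \<rho>' \<longleftrightarrow> (f x \<in> P' \<and> f y \<in> Q') \<or>
        (f x \<in> Q' \<and> f y \<in> P') \<or> (f x \<in> K' \<and> f y = v') \<or> (f y \<in> K' \<and> f x = v') \<or>
        (f x \<in> K' \<and> f y \<in> K' \<and> f x \<noteq> f y)"
      by (rule H'.mem_host_edges_single_root_iff[OF root'])
    ultimately show ?thesis
      using mem_iff[OF that(1)] mem_iff[OF that(2)] by simp
  qed
  then show ?thesis
    unfolding graph_iso_def using bij by auto
qed

end

lemma TK_eq_host_edges: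
  assumes "2 \<le> m"
  shows "TK (m + t) (t + 2) = host_edges {0..<m div 2} {m div 2..<m} {m..<m + t} (\<lambda>_. 0)"
proof -
  let ?a = "m div 2" and ?K = "{m..<m + t}"
  have "m + t - (t + 2) + 2 = m"
    using assms by simp
  then have TK: "TK (m + t) (t + 2) = {{x, y} | x y. x < ?a \<and> ?a \<le> y \<and> y < m} \<union>
      {{x, y} | x y. x \<in> insert 0 ?K \<and> y \<in> insert 0 ?K \<and> x \<noteq> y}"
    unfolding TK_def Let_def by simp
  have "0 \<notin> ?K"
    using assms by simp
  then have "{{x, y} | x y. x \<in> insert 0 ?K \<and> y \<in> insert 0 ?K \<and> x \<noteq> y} =
      {{0, c} | c. c \<in> ?K} \<union> {{c, d} | c d. c \<in> ?K \<and> d \<in> ?K \<and> c \<noteq> d}"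
    by (auto simp: insert_commute)
  then show ?thesis
    unfolding TK host_edges_def by auto
qed

lemma host_graph_TK:
  assumes "2 \<le> m"
  shows "host_graph (m + t) {0..<m div 2} {m div 2..<m} {m..<m + t} (\<lambda>_. 0)"
  using assms by unfold_locales auto

section \<open>A test vector for host graphs\<close>

definition root_weight :: "real \<Rightarrow> nat \<Rightarrow> real" where
  "root_weight l s = (l + 1 - s) / ((l + 1) * (l - s))"

definition pendant_weight :: "real \<Rightarrow> nat \<Rightarrow> real" where
  "pendant_weight l s = 1 / ((l + 1) * (l - s))"

lemma root_weight_pos: "real s < l \<Longrightarrow> 0 < root_weight l s"
  unfolding root_weight_def by auto

lemma pendant_weight_pos: "real s < l \<Longrightarrow> 0 < pendant_weight l s"
  unfolding pendant_weight_def by auto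

text \<open>The weights solve the eigen-equations at a root with \<open>s\<close> pendants and at its pendants,
  except that the root still demands \<open>1\<close> from the opposite side of the bipartite graph.\<close>
lemma root_weight_eq:
  assumes "real s < l"
  shows "l * root_weight l s - s * pendant_weight l s = 1"
proof -
  define D where "D = (l + 1) * (l - s)"
  have "l * root_weight l s - s * pendant_weight l s = (l * (l + 1 - s) - s) / D"
    unfolding root_weight_def pendant_weight_def D_def[symmetric]
    by (simp add: algebra_simps diff_divide_distrib add_divide_distrib)
  also have "l * (l + 1 - s) - s = D"
    unfolding D_def by (simp add: algebra_simps)
  finally show ?thesis
    using assms by (simp add: D_def)
qed

lemma pendant_weight_eq:
  assumes "real s < l"
  shows "root_weight l s + (real s - 1) * pendant_weight l s = l * pendant_weight l s"
proof -
  define D where "D = (l + 1) * (l - s)"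
  have "root_weight l s + (real s - 1) * pendant_weight l s = ((l + 1 - s) + (real s - 1)) / D"
    unfolding root_weight_def pendant_weight_def D_def[symmetric]
    by (simp only: times_divide_eq_right mult_1_right add_divide_distrib)
  also have "(l + 1 - s) + (real s - 1) = l"
    by simp
  finally show ?thesis
    unfolding pendant_weight_def D_def by simp
qed

definition weight_sum :: "real \<Rightarrow> nat set \<Rightarrow> (nat \<Rightarrow> nat) \<Rightarrow> nat set \<Rightarrow> real" where
  "weight_sum l K \<rho> S = (\<Sum>v\<in>S. root_weight l (card (pendants K \<rho> v)))"

definition test_vec :: "real \<Rightarrow> real \<Rightarrow> real \<Rightarrow> nat set \<Rightarrow> nat set \<Rightarrow> (nat \<Rightarrow> nat) \<Rightarrow> nat \<Rightarrow> real"
  where "test_vec l \<alpha> \<beta> P K \<rho> i =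
    (if i \<in> K then (if \<rho> i \<in> P then \<alpha> else \<beta>) * pendant_weight l (card (pendants K \<rho> (\<rho> i)))
     else (if i \<in> P then \<alpha> else \<beta>) * root_weight l (card (pendants K \<rho> i)))"

context host_graph
begin

context
  fixes l :: real
  assumes card_K_lt: "real (card K) < l"
begin

lemma card_pendants_lt: "real (card (pendants K \<rho> v)) < l"
  using card_pendants_le[of v] card_K_lt by linarith

lemma weight_sum_nonneg: "0 \<le> weight_sum l K \<rho> S"
  unfolding weight_sum_def by (intro sum_nonneg less_imp_le root_weight_pos card_pendants_lt)

lemma test_vec_pos: "0 < \<alpha> \<Longrightarrow> 0 < \<beta> \<Longrightarrow> 0 < test_vec l \<alpha> \<beta> P K \<rho> i"
  unfolding test_vec_def
  by (auto intro!: mult_pos_pos root_weight_pos pendant_weight_pos card_pendants_lt)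

lemma test_vec_rows:
  assumes "i < n"
  shows "(\<Sum>j\<in>neighbors n (host_edges P Q K \<rho>) i. test_vec l \<alpha> \<beta> P K \<rho> j) =
    l * test_vec l \<alpha> \<beta> P K \<rho> i - (if i \<in> P then \<alpha> - \<beta> * weight_sum l K \<rho> Q
      else if i \<in> Q then \<beta> - \<alpha> * weight_sum l K \<rho> P else 0)"
proof -
  let ?y = "test_vec l \<alpha> \<beta> P K \<rho>" and ?s = "\<lambda>v. card (pendants K \<rho> v)"
  define side where "side v = (if v \<in> P then \<alpha> else \<beta>)" for v
  have finite_pendants: "finite (pendants K \<rho> v)" for v
    using finite_parts unfolding pendants_def by simp
  have y_root: "?y v = side v * root_weight l (?s v)" if "v \<in> P \<union> Q" for v
    using that disjoint_PK disjoint_QK unfolding test_vec_def side_def by auto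
  have sum_pendants: "(\<Sum>j\<in>pendants K \<rho> v. ?y j) = ?s v * (side v * pendant_weight l (?s v))" for v
  proof -
    have "(\<Sum>j\<in>pendants K \<rho> v. ?y j) = (\<Sum>j\<in>pendants K \<rho> v. side v * pendant_weight l (?s v))"
      by (rule sum.cong) (auto simp: pendants_def test_vec_def side_def)
    then show ?thesis
      by simp
  qed
  have sum_P: "(\<Sum>j\<in>P. ?y j) = \<alpha> * weight_sum l K \<rho> P"
    and sum_Q: "(\<Sum>j\<in>Q. ?y j) = \<beta> * weight_sum l K \<rho> Q"
    using disjoint_PQ y_root unfolding weight_sum_def side_def sum_distrib_left
    by (auto intro!: sum.cong)
  have "i \<in> P \<union> Q \<union> K"
    using parts_cover assms by auto
  then consider (P) "i \<in> P" | (Q) "i \<in> Q" | (K) "i \<in> K"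
    by blast
  then show ?thesis
  proof cases
    case P
    have "Q \<inter> pendants K \<rho> i = {}"
      using disjoint_QK unfolding pendants_def by auto
    then have "(\<Sum>j\<in>neighbors n (host_edges P Q K \<rho>) i. ?y j) = (\<Sum>j\<in>Q. ?y j) + (\<Sum>j\<in>pendants K \<rho> i. ?y j)"
      unfolding neighbors_root_P[OF P] using finite_parts finite_pendants by (intro sum.union_disjoint) auto
    then show ?thesis
      using P y_root sum_pendants sum_Q root_weight_eq[OF card_pendants_lt, of i]
      by (auto simp: side_def algebra_simps)
  next
    case Q
    have "P \<inter> pendants K \<rho> i = {}"
      using disjoint_PK unfolding pendants_def by auto
    then have "(\<Sum>j\<in>neighbors n (host_edges P Q K \<rho>) i. ?y j) = (\<Sum>j\<in>P. ?y j) + (\<Sum>j\<in>pendants K \<rho> i. ?y j)"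
      unfolding neighbors_root_Q[OF Q] using finite_parts finite_pendants by (intro sum.union_disjoint) auto
    then show ?thesis
      using Q disjoint_PQ y_root sum_pendants sum_P root_weight_eq[OF card_pendants_lt, of i]
      by (auto simp: side_def algebra_simps)
  next
    case K
    define v where "v = \<rho> i"
    have v: "v \<in> P \<union> Q" "v \<notin> pendants K \<rho> v" "i \<in> pendants K \<rho> v"
      using root_in_parts[OF K] disjoint_PK disjoint_QK K unfolding v_def pendants_def by auto
    have "(\<Sum>j\<in>neighbors n (host_edges P Q K \<rho>) i. ?y j) = ?y v + (\<Sum>j\<in>pendants K \<rho> v - {i}. ?y j)"
      unfolding neighbors_pendant[OF K] v_def[symmetric] using v finite_pendants by (intro sum.insert) auto
    also have "\<dots> = ?y v + (\<Sum>j\<in>pendants K \<rho> v. ?y j) - ?y i"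
      using v finite_pendants by (simp add: sum_diff1)
    also have "\<dots> = side v * (root_weight l (?s v) + (real (?s v) - 1) * pendant_weight l (?s v))"
      using K y_root[OF v(1)] sum_pendants[of v] unfolding v_def test_vec_def side_def
      by (simp add: algebra_simps)
    also have "\<dots> = l * ?y i"
      using K pendant_weight_eq[OF card_pendants_lt, of v]
      unfolding v_def test_vec_def side_def by simp
    finally show ?thesis
      using K disjoint_PK disjoint_QK by auto
  qed
qed

lemma lambda_G_lt_of_weight_product_lt:
  assumes "0 < n" "E \<subseteq> host_edges P Q K \<rho>"
    and lt: "weight_sum l K \<rho> P * weight_sum l K \<rho> Q < 1"
  shows "lambda_G n E < l"
proof -
  define FP where "FP = weight_sum l K \<rho> P"
  define FQ where "FQ = weight_sum l K \<rho> Q"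
  have "0 \<le> FP" "0 \<le> FQ"
    unfolding FP_def FQ_def using weight_sum_nonneg by auto
  define \<beta> where "\<beta> = FP + (1 - FP * FQ) / (FQ + 1)"
  have "FP < \<beta>"
    unfolding \<beta>_def using lt \<open>0 \<le> FQ\<close> by (simp add: FP_def FQ_def)
  have "\<beta> * FQ < 1"
  proof -
    have "(1 - FP * FQ) / (FQ + 1) * FQ < 1 - FP * FQ"
      using lt \<open>0 \<le> FQ\<close> by (simp add: FP_def FQ_def field_simps)
    then show ?thesis
      unfolding \<beta>_def by (simp add: algebra_simps)
  qed
  let ?y = "test_vec l 1 \<beta> P K \<rho>"
  have y_pos: "0 < ?y i" if "i < n" for i
    using \<open>FP < \<beta>\<close> \<open>0 \<le> FP\<close> by (intro test_vec_pos) auto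
  have rows: "(\<Sum>j\<in>neighbors n (host_edges P Q K \<rho>) i. ?y j) \<le> l * ?y i"
    and strict: "i \<in> P \<union> Q \<Longrightarrow> (\<Sum>j\<in>neighbors n (host_edges P Q K \<rho>) i. ?y j) < l * ?y i"
    if "i < n" for i
    using test_vec_rows[OF that, of 1 \<beta>] \<open>FP < \<beta>\<close> \<open>\<beta> * FQ < 1\<close>
    unfolding FP_def FQ_def by auto
  have "lambda_G n E \<le> l"
    by (rule lambda_G_le_of_supersolution[where y = ?y, OF assms(1,2) y_pos rows])
  moreover have "lambda_G n E \<noteq> l"
  proof
    assume "lambda_G n E = l"
    then obtain M where "M \<noteq> {}" "M \<subseteq> {0..<n}"
      and tight: "\<And>i. i \<in> M \<Longrightarrow> (\<Sum>j\<in>neighbors n (host_edges P Q K \<rho>) i. ?y j) = l * ?y i"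
      and closed: "\<And>i. i \<in> M \<Longrightarrow> neighbors n (host_edges P Q K \<rho>) i \<subseteq> M"
      and "\<And>i. i \<in> M \<Longrightarrow> neighbors n (host_edges P Q K \<rho>) i \<subseteq> neighbors n E i"
      using tight_set_of_supersolution[where y = ?y, OF assms(1,2) y_pos rows] by blast
    obtain j where "j \<in> M" "j \<in> P \<union> Q"
      using closed_set_meets_roots[OF \<open>M \<noteq> {}\<close> \<open>M \<subseteq> {0..<n}\<close> closed] by blast
    moreover have "j < n"
      using \<open>j \<in> M\<close> \<open>M \<subseteq> {0..<n}\<close> by auto
    ultimately show False
      using tight strict by fastforce
  qed
  ultimately show ?thesis
    by simp
qed

lemma lambda_G_le_of_weight_product_eq:
  assumes "0 < n" "E \<subseteq> host_edges P Q K \<rho>"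
    and eq: "weight_sum l K \<rho> P * weight_sum l K \<rho> Q = 1"
  shows "lambda_G n E \<le> l" and "lambda_G n E = l \<Longrightarrow> E = host_edges P Q K \<rho>"
proof -
  let ?y = "test_vec l 1 (weight_sum l K \<rho> P) P K \<rho>"
  have "0 < weight_sum l K \<rho> P"
    using eq weight_sum_nonneg[of P] by (cases "weight_sum l K \<rho> P = 0") auto
  then have y_pos: "0 < ?y i" if "i < n" for i
    by (intro test_vec_pos) auto
  have rows: "(\<Sum>j\<in>neighbors n (host_edges P Q K \<rho>) i. ?y j) \<le> l * ?y i" if "i < n" for i
    using test_vec_rows[OF that] eq by (simp add: mult.commute)
  show "lambda_G n E \<le> l"
    by (rule lambda_G_le_of_supersolution[where y = ?y, OF assms(1,2) y_pos rows])
  assume "lambda_G n E = l"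
  then obtain M where "M \<noteq> {}" "M \<subseteq> {0..<n}"
    and "\<And>i. i \<in> M \<Longrightarrow> (\<Sum>j\<in>neighbors n (host_edges P Q K \<rho>) i. ?y j) = l * ?y i"
    and closed: "\<And>i. i \<in> M \<Longrightarrow> neighbors n (host_edges P Q K \<rho>) i \<subseteq> M"
    and agree: "\<And>i. i \<in> M \<Longrightarrow> neighbors n (host_edges P Q K \<rho>) i \<subseteq> neighbors n E i"
    using tight_set_of_supersolution[where y = ?y, OF assms(1,2) y_pos rows] by blast
  have "P \<noteq> {}" "Q \<noteq> {}"
    using eq unfolding weight_sum_def by auto
  then have "M = {0..<n}"
    using closed_set_eq_vertices[OF \<open>M \<noteq> {}\<close> \<open>M \<subseteq> {0..<n}\<close> _ _ closed] by blast
  have "host_edges P Q K \<rho> \<subseteq> E"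
  proof
    fix e assume e: "e \<in> host_edges P Q K \<rho>"
    then obtain x y where xy: "e = {x, y}" "x < n" "y < n"
      by (rule host_edges_vertices)
    then have "y \<in> neighbors n (host_edges P Q K \<rho>) x"
      using e unfolding neighbors_def by simp
    then have "y \<in> neighbors n E x"
      using agree \<open>M = {0..<n}\<close> xy(2) by auto
    then show "e \<in> E"
      unfolding neighbors_def xy(1) by simp
  qed
  then show "E = host_edges P Q K \<rho>"
    using assms(2) by blast
qed

lemma lambda_G_host_ge:
  assumes "0 < n" and eq: "weight_sum l K \<rho> P * weight_sum l K \<rho> Q = 1"
  shows "l \<le> lambda_G n (host_edges P Q K \<rho>)"
proof -
  let ?y = "test_vec l 1 (weight_sum l K \<rho> P) P K \<rho>"
  have "0 < weight_sum l K \<rho> P"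
    using eq weight_sum_nonneg[of P] by (cases "weight_sum l K \<rho> P = 0") auto
  then have "?y 0 \<noteq> 0"
    using test_vec_pos[of 1 "weight_sum l K \<rho> P" 0] by simp
  moreover have "0 \<le> l"
    using card_K_lt by linarith
  moreover have "(\<Sum>j\<in>neighbors n (host_edges P Q K \<rho>) i. ?y j) = l * ?y i" if "i < n" for i
    using test_vec_rows[OF that] eq by (simp add: mult.commute)
  ultimately show ?thesis
    by (rule lambda_G_ge_eigenvalue[OF \<open>0 < n\<close>])
qed

lemma lambda_G_subgraph_host:
  assumes "0 < n" "E \<subseteq> host_edges P Q K \<rho>"
    and "weight_sum l K \<rho> P * weight_sum l K \<rho> Q \<le> 1"
  shows "lambda_G n E \<le> l"
    and "lambda_G n E = l \<Longrightarrow>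
      weight_sum l K \<rho> P * weight_sum l K \<rho> Q = 1 \<and> E = host_edges P Q K \<rho>"
  using lambda_G_lt_of_weight_product_lt[OF assms(1,2)] lambda_G_le_of_weight_product_eq[OF assms(1,2)]
    assms(3) by (cases "weight_sum l K \<rho> P * weight_sum l K \<rho> Q < 1"; force)+

end

end

section \<open>The excess function\<close>

definition excess :: "real \<Rightarrow> nat \<Rightarrow> real" where
  "excess l s = s / (l - s)"

lemma excess_0 [simp]: "excess l 0 = 0"
  unfolding excess_def by simp

lemma excess_nonneg: "real s < l \<Longrightarrow> 0 \<le> excess l s"
  unfolding excess_def by simp

lemma excess_pos: "real s < l \<Longrightarrow> 1 \<le> s \<Longrightarrow> 0 < excess l s"
  unfolding excess_def by simp

lemma root_weight_eq_excess:
  assumes "real s < l" "0 < l"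
  shows "root_weight l s = (1 + excess l s / (l + 1)) / l"
proof -
  define D where "D = (l + 1) * (l - s)"
  have "0 < D"
    using assms unfolding D_def by simp
  have "(1 + excess l s / (l + 1)) / l = ((D + s) / D) / l"
    unfolding excess_def D_def using \<open>0 < D\<close> by (simp add: field_simps D_def)
  also have "D + s = l * (l + 1 - s)"
    unfolding D_def by (simp add: algebra_simps)
  finally show ?thesis
    using assms unfolding root_weight_def D_def by simp
qed

lemma weight_sum_eq_excess:
  assumes "finite S" "0 < l" "\<And>v. v \<in> S \<Longrightarrow> real (card (pendants K \<rho> v)) < l"
  shows "weight_sum l K \<rho> S = (card S + (\<Sum>v\<in>S. excess l (card (pendants K \<rho> v))) / (l + 1)) / l"
proof -
  have "weight_sum l K \<rho> S = (\<Sum>v\<in>S. (1 + excess l (card (pendants K \<rho> v)) / (l + 1)) / l)"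
    unfolding weight_sum_def using assms by (intro sum.cong) (auto simp: root_weight_eq_excess)
  then show ?thesis
    by (simp add: sum.distrib sum_divide_distrib[symmetric])
qed

lemma excess_add:
  assumes "real (s1 + s2) < l"
  shows "excess l (s1 + s2) - excess l s1 - excess l s2 =
    excess l s1 * excess l s2 * ((2 * l - s1 - s2) / (l - s1 - s2))"
proof -
  obtain A :: real where l: "l = A + s1 + s2" and "0 < A"
    using assms by (intro that[of "l - real s1 - real s2"]) auto
  then have "0 < A + s1" "0 < A + s2"
    by auto
  then show ?thesis
    unfolding excess_def l using \<open>0 < A\<close> by (simp add: divide_simps) (simp add: algebra_simps)
qed

lemma excess_superadditive:
  assumes "real (s1 + s2) < l"
  shows "excess l s1 + excess l s2 \<le> excess l (s1 + s2)"
    and "1 \<le> s1 \<Longrightarrow> 1 \<le> s2 \<Longrightarrow> excess l s1 + excess l s2 < excess l (s1 + s2)"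
proof -
  have "0 < (2 * l - s1 - s2) / (l - s1 - s2)"
    using assms by simp
  moreover have "0 \<le> excess l s1" "0 \<le> excess l s2"
    using assms by (auto intro: excess_nonneg)
  ultimately show "excess l s1 + excess l s2 \<le> excess l (s1 + s2)"
    using excess_add[OF assms] by (smt (verit) mult_nonneg_nonneg)
  assume "1 \<le> s1" "1 \<le> s2"
  then have "0 < excess l s1" "0 < excess l s2"
    using assms by (auto intro: excess_pos)
  with \<open>0 < (2 * l - s1 - s2) / (l - s1 - s2)\<close> show "excess l s1 + excess l s2 < excess l (s1 + s2)"
    using excess_add[OF assms] by (smt (verit) mult_pos_pos)
qed

lemma sum_excess_le:
  fixes f :: "'a \<Rightarrow> nat"
  assumes "finite S" "real (sum f S) < l"
  shows "(\<Sum>v\<in>S. excess l (f v)) \<le> excess l (sum f S)"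
    and "(\<Sum>v\<in>S. excess l (f v)) = excess l (sum f S) \<Longrightarrow> sum f S = 0 \<or> (\<exists>v\<in>S. f v = sum f S)"
proof -
  have "(\<Sum>v\<in>S. excess l (f v)) \<le> excess l (sum f S) \<and>
    ((\<Sum>v\<in>S. excess l (f v)) = excess l (sum f S) \<longrightarrow> sum f S = 0 \<or> (\<exists>v\<in>S. f v = sum f S))"
    using assms
  proof (induction S rule: finite_induct)
    case empty
    then show ?case by simp
  next
    case (insert x F)
    then have l_x: "real (f x + sum f F) < l" and l_F: "real (sum f F) < l"
      by simp_all
    have IH: "(\<Sum>v\<in>F. excess l (f v)) \<le> excess l (sum f F)"
      "(\<Sum>v\<in>F. excess l (f v)) = excess l (sum f F) \<Longrightarrow> sum f F = 0 \<or> (\<exists>v\<in>F. f v = sum f F)"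
      using insert.IH[OF l_F] by blast+
    note super = excess_superadditive[OF l_x]
    show ?case
    proof (intro conjI impI)
      show "(\<Sum>v\<in>insert x F. excess l (f v)) \<le> excess l (sum f (insert x F))"
        using insert IH(1) super(1) by simp
      assume eq: "(\<Sum>v\<in>insert x F. excess l (f v)) = excess l (sum f (insert x F))"
      then have eq_F: "(\<Sum>v\<in>F. excess l (f v)) = excess l (sum f F)"
        and eq_x: "excess l (f x) + excess l (sum f F) = excess l (f x + sum f F)"
        using insert IH(1) super(1) by simp_all
      have "f x = 0 \<or> sum f F = 0"
        using super(2) eq_x by fastforce
      then show "sum f (insert x F) = 0 \<or> (\<exists>v\<in>insert x F. f v = sum f (insert x F))"
        using IH(2)[OF eq_F] insert by auto
    qed
  qed
  then show "(\<Sum>v\<in>S. excess l (f v)) \<le> excess l (sum f S)"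
    and "(\<Sum>v\<in>S. excess l (f v)) = excess l (sum f S) \<Longrightarrow> sum f S = 0 \<or> (\<exists>v\<in>S. f v = sum f S)"
    by blast+
qed

lemma sq_le_balanced_split:
  fixes m :: nat
  shows "m * m \<le> 4 * ((m div 2) * (m - m div 2)) + 1"
proof -
  define a where "a = m div 2"
  have "m = 2 * a \<or> m = 2 * a + 1"
    unfolding a_def by linarith
  then show ?thesis
    unfolding a_def[symmetric] by (elim disjE) (simp_all add: algebra_simps)
qed

lemma mult_le_balanced_split:
  fixes p q m :: nat
  assumes "p + q = m"
  shows "p * q \<le> (m div 2) * (m - m div 2)"
    and "p * q = (m div 2) * (m - m div 2) \<Longrightarrow> p = m div 2 \<or> q = m div 2"
proof -
  define a where "a = m div 2"
  have "4 * (int p * int q) \<le> int m * int m"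
  proof -
    have "0 \<le> (int p - int q)\<^sup>2"
      by simp
    moreover have "int m = int p + int q"
      using assms by simp
    ultimately show ?thesis
      by (simp add: power2_eq_square algebra_simps)
  qed
  moreover have "int m * int m \<le> 4 * (int a * int (m - a)) + 1"
    using sq_le_balanced_split[of m] unfolding a_def[symmetric] by (simp flip: of_nat_mult)
  ultimately have "int p * int q \<le> int a * int (m - a)"
    by linarith
  then show "p * q \<le> (m div 2) * (m - m div 2)"
    unfolding a_def[symmetric] by (simp flip: of_nat_mult)
  assume "p * q = (m div 2) * (m - m div 2)"
  then have "int p * int q = int a * int (m - a)"
    unfolding a_def[symmetric] by (simp flip: of_nat_mult)
  moreover have "int (m - a) = int m - int a" "int q = int m - int p"
    using assms unfolding a_def by auto
  ultimately have "(int p - int a) * (int p - (int m - int a)) = 0"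
    by (simp add: algebra_simps)
  then show "p = m div 2 \<or> q = m div 2"
    using assms unfolding a_def by auto
qed

section \<open>The critical root\<close>

locale critical_root =
  fixes m t a b :: nat and l :: real
  assumes a_def: "a = m div 2" and b_def: "b = m - a"
    and m_ge: "90 \<le> m" and t_ge: "1 \<le> t" and t_small: "9 * t < m"
    and l_ge: "12 * m / 25 \<le> l"
    and l_sq: "l * l = a * b + b * excess l t / (l + 1)"

lemma critical_root_exists:
  assumes "90 \<le> m" "1 \<le> t" "9 * t < m"
  obtains l where "critical_root m t (m div 2) (m - m div 2) l"
proof -
  define a where "a = m div 2"
  define b where "b = m - a"
  define f where "f x = x * x - real a * b - b * (t / (x - t)) / (x + 1)" for x :: real
  define L where "L = 12 * real m / 25"
  have "real t < real m / 9"
    using assms(3) by linarith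
  then have L_t: "1 < L - t"
    unfolding L_def using assms(1) by linarith
  have "L * L \<le> real a * b"
  proof -
    have "real (m * m) \<le> real (4 * (a * b) + 1)"
      using sq_le_balanced_split[of m] unfolding a_def b_def by (simp only: of_nat_le_iff)
    moreover have "90 * 90 \<le> real m * m"
      using assms(1) by (intro mult_mono) auto
    ultimately show ?thesis
      unfolding L_def by simp
  qed
  moreover have "0 \<le> b * (t / (L - t)) / (L + 1)"
    using L_t by simp
  ultimately have "f L \<le> 0"
    unfolding f_def by linarith
  have "0 \<le> f m"
  proof -
    have "real a * b \<le> real m / 2 * m"
      unfolding a_def b_def by (intro mult_mono) auto
    moreover have "t / (real m - t) \<le> t"
      using \<open>real t < real m / 9\<close> assms(2) by (simp add: divide_le_eq)
    then have "t / (real m - t) \<le> real m / 9"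
      using \<open>real t < real m / 9\<close> by linarith
    then have "b * (t / (real m - t)) \<le> m * (real m / 9)"
      using \<open>real t < real m / 9\<close> unfolding b_def by (intro mult_mono) auto
    moreover have "b * (t / (real m - t)) / (real m + 1) \<le> b * (t / (real m - t)) / 1"
      using \<open>real t < real m / 9\<close> by (intro divide_left_mono) auto
    moreover have "real m / 2 * m + real m * (real m / 9) \<le> real m * m"
      by (simp add: field_simps)
    ultimately show ?thesis
      unfolding f_def div_by_1 by linarith
  qed
  moreover have "L \<le> m"
    unfolding L_def by simp
  moreover have "isCont f x" if "L \<le> x" for x
  proof -
    have "x - t \<noteq> 0" "x + 1 \<noteq> 0"
      using that L_t L_def by auto
    then show ?thesis
      unfolding f_def by (intro continuous_intros) auto
  qed
  ultimately obtain l where "L \<le> l" "f l = 0"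
    using IVT[of f L 0 "real m"] \<open>f L \<le> 0\<close> by auto
  then have "critical_root m t a b l"
    using assms unfolding critical_root_def f_def excess_def a_def b_def L_def by simp
  then show thesis
    using that unfolding a_def b_def by blast
qed

context critical_root
begin

lemma a_le_b: "a \<le> b" and a_add_b: "a + b = m" and a_ge: "45 \<le> a"
  using m_ge unfolding a_def b_def by auto

lemma t_lt_l: "real t < l"
  using l_ge t_small m_ge by linarith

lemma l_pos: "0 < l"
  using l_ge m_ge by linarith

lemma excess_t_pos: "0 < excess l t"
  using excess_pos t_lt_l t_ge by blast

lemma m_excess_lt: "m * (excess l t / (l + 1)) < 2 / 3"
proof -
  have "real t < real m / 9" "90 \<le> real m"
    using t_small m_ge by linarith+
  then have "(83 * m / 225) * (12 * m / 25) \<le> (l - t) * (l + 1)"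
    using l_ge by (intro mult_mono) auto
  moreover have "real m * t < 2 / 3 * ((83 * m / 225) * (12 * m / 25))"
    using \<open>real t < real m / 9\<close> \<open>90 \<le> real m\<close> by (simp add: algebra_simps)
  ultimately have "real m * t < 2 / 3 * ((l - t) * (l + 1))"
    by linarith
  moreover have "0 < (l - t) * (l + 1)"
    using t_lt_l l_pos by simp
  ultimately show ?thesis
    unfolding excess_def by (simp add: field_simps)
qed

lemma excess_t_lt: "excess l t / (l + 1) < 1 / 3"
proof -
  have "90 * (excess l t / (l + 1)) \<le> m * (excess l t / (l + 1))"
    using m_ge excess_t_pos l_pos by (intro mult_right_mono) auto
  then show ?thesis
    using m_excess_lt by linarith
qed

lemma product_lt_of_unbalanced:
  fixes p q :: nat and z1 z2 :: real
  assumes "p + q = m" "p * q < a * b" "0 \<le> z1" "0 \<le> z2" "z1 + z2 \<le> excess l t / (l + 1)"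
  shows "(p + z1) * (q + z2) < l * l"
proof -
  let ?Z = "excess l t / (l + 1)"
  have "real (p * q) + 1 \<le> real (a * b)"
    using assms(2) by linarith
  moreover have "p * z2 + q * z1 \<le> m * ?Z"
  proof -
    have "p * z2 + q * z1 \<le> m * z2 + m * z1"
      using assms(1,3,4) by (intro add_mono mult_right_mono) auto
    also have "\<dots> = m * (z1 + z2)"
      by (simp add: algebra_simps)
    also have "\<dots> \<le> m * ?Z"
      using assms(5) by (intro mult_left_mono) auto
    finally show ?thesis .
  qed
  moreover have "z1 * z2 \<le> 1 / 3 * (1 / 3)"
  proof -
    have "z1 \<le> 1 / 3" "z2 \<le> 1 / 3"
      using assms(3-5) excess_t_lt by linarith+
    then show ?thesis
      using assms(3,4) by (intro mult_mono) auto
  qed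
  moreover have "0 \<le> b * excess l t / (l + 1)"
    using excess_t_pos l_pos by simp
  ultimately show ?thesis
    using m_excess_lt l_sq by (simp add: algebra_simps)
qed

lemma product_le_one_sided:
  fixes p q :: nat and z :: real
  assumes "p * q = a * b" "q \<le> b" "0 \<le> z" "z \<le> excess l t / (l + 1)"
  shows "(p + z) * q \<le> l * l"
    and "(p + z) * q = l * l \<Longrightarrow> q = b \<and> z = excess l t / (l + 1)"
proof -
  let ?Z = "excess l t / (l + 1)"
  have "0 < ?Z"
    using excess_t_pos l_pos by simp
  have "(p + z) * q = a * b + q * z" and "l * l = a * b + b * ?Z"
    using assms(1) l_sq by (simp_all add: algebra_simps flip: of_nat_mult)
  moreover have "q * z \<le> b * ?Z"
    using assms(2-4) \<open>0 < ?Z\<close> by (intro mult_mono) auto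
  ultimately show "(p + z) * q \<le> l * l"
    by simp
  assume "(p + z) * q = l * l"
  then have "q * z = b * ?Z"
    using \<open>(p + z) * q = a * b + q * z\<close> \<open>l * l = a * b + b * ?Z\<close> by simp
  moreover have "q * z < b * ?Z" if "q < b"
  proof -
    have "q * z \<le> q * ?Z"
      using assms(4) by (intro mult_left_mono) auto
    also have "\<dots> < b * ?Z"
      using that \<open>0 < ?Z\<close> by (intro mult_strict_right_mono) auto
    finally show ?thesis .
  qed
  ultimately have "q = b"
    using assms(2) by fastforce
  moreover have "real b \<noteq> 0"
    using a_le_b a_ge by simp
  ultimately show "q = b \<and> z = ?Z"
    using \<open>q * z = b * ?Z\<close> mult_left_cancel by blast
qed

lemma product_lt_two_sided:
  fixes p q s1 s2 :: nat and z1 z2 :: real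
  assumes "p * q = a * b" "p \<le> b" "q \<le> b" "s1 + s2 = t" "1 \<le> s1" "1 \<le> s2"
    and z1: "0 \<le> z1" "z1 \<le> excess l s1 / (l + 1)" and z2: "0 \<le> z2" "z2 \<le> excess l s2 / (l + 1)"
  shows "(p + z1) * (q + z2) < l * l"
proof -
  define e1 where "e1 = excess l s1"
  define e2 where "e2 = excess l s2"
  have "real (s1 + s2) < l"
    using assms(4) t_lt_l by simp
  then have "0 < e1" "0 < e2"
    unfolding e1_def e2_def using assms(5,6) by (auto intro: excess_pos)
  have "1 \<le> (2 * l - s1 - s2) / (l - s1 - s2)"
    using \<open>real (s1 + s2) < l\<close> by simp
  then have "e1 * e2 * 1 \<le> e1 * e2 * ((2 * l - s1 - s2) / (l - s1 - s2))"
    using \<open>0 < e1\<close> \<open>0 < e2\<close> by (intro mult_left_mono) auto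
  then have "e1 * e2 \<le> excess l t - e1 - e2"
    using excess_add[OF \<open>real (s1 + s2) < l\<close>] unfolding e1_def e2_def assms(4) by simp
  also have "\<dots> = 1 * (excess l t - e1 - e2)"
    by simp
  also have "\<dots> \<le> b * (excess l t - e1 - e2)"
    using \<open>e1 * e2 \<le> excess l t - e1 - e2\<close> mult_pos_pos[OF \<open>0 < e1\<close> \<open>0 < e2\<close>] a_le_b a_ge
    by (intro mult_right_mono) auto
  finally have gap: "e1 * e2 / (l + 1) \<le> b * ((excess l t - e1 - e2) / (l + 1))"
    using l_pos by (simp add: divide_right_mono)
  have "p * z2 + q * z1 \<le> b * (e1 / (l + 1) + e2 / (l + 1))"
  proof -
    have "p * z2 + q * z1 \<le> b * z2 + b * z1"
      using assms(2,3) z1 z2 by (intro add_mono mult_right_mono) auto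
    also have "\<dots> \<le> b * (e1 / (l + 1) + e2 / (l + 1))"
      using z1 z2 unfolding e1_def e2_def by (simp add: distrib_left[symmetric] mult_left_mono)
    finally show ?thesis .
  qed
  moreover have "z1 * z2 < e1 * e2 / (l + 1)"
  proof -
    have "z1 * z2 \<le> (e1 / (l + 1)) * (e2 / (l + 1))"
      using z1 z2 unfolding e1_def e2_def by (intro mult_mono) auto
    also have "\<dots> < e1 * e2 / (l + 1)"
      using \<open>0 < e1\<close> \<open>0 < e2\<close> l_pos by (simp add: divide_less_eq)
    finally show ?thesis .
  qed
  moreover have "(p + z1) * (q + z2) = a * b + p * z2 + q * z1 + z1 * z2"
    using assms(1) by (simp add: algebra_simps flip: of_nat_mult)
  moreover have "l * l = a * b + b * (e1 / (l + 1) + e2 / (l + 1)) + b * ((excess l t - e1 - e2) / (l + 1))"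
    using l_sq by (simp add: algebra_simps diff_divide_distrib add_divide_distrib)
  ultimately show ?thesis
    using gap by linarith
qed

lemma pendant_product_le:
  fixes p q s1 s2 :: nat and e1 e2 :: real
  assumes pq: "p + q = m" and s: "s1 + s2 = t"
    and e1: "0 \<le> e1" "e1 \<le> excess l s1" and e2: "0 \<le> e2" "e2 \<le> excess l s2"
  shows "(p + e1 / (l + 1)) * (q + e2 / (l + 1)) \<le> l * l"
    and "(p + e1 / (l + 1)) * (q + e2 / (l + 1)) = l * l \<Longrightarrow>
      (s2 = 0 \<and> e1 = excess l t \<and> p = a) \<or> (s1 = 0 \<and> e2 = excess l t \<and> q = a)"
proof -
  define z1 where "z1 = e1 / (l + 1)"
  define z2 where "z2 = e2 / (l + 1)"
  have "0 < l + 1"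
    using l_pos by simp
  have z1: "0 \<le> z1" "z1 \<le> excess l s1 / (l + 1)" and z2: "0 \<le> z2" "z2 \<le> excess l s2 / (l + 1)"
    unfolding z1_def z2_def using e1 e2 \<open>0 < l + 1\<close> by (auto intro: divide_right_mono)
  have "real (s1 + s2) < l"
    using s t_lt_l by simp
  then have "excess l s1 + excess l s2 \<le> excess l t"
    using excess_superadditive(1) s by blast
  then have "excess l s1 / (l + 1) + excess l s2 / (l + 1) \<le> excess l t / (l + 1)"
    using \<open>0 < l + 1\<close> by (simp add: add_divide_distrib[symmetric] divide_right_mono)
  then have z_sum: "z1 + z2 \<le> excess l t / (l + 1)"
    using z1 z2 by linarith
  have "(p + z1) * (q + z2) \<le> l * l \<and> ((p + z1) * (q + z2) = l * l \<longrightarrow>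
    (s2 = 0 \<and> z1 = excess l t / (l + 1) \<and> p = a) \<or> (s1 = 0 \<and> z2 = excess l t / (l + 1) \<and> q = a))"
  proof (cases "p * q < a * b")
    case True
    then show ?thesis
      using product_lt_of_unbalanced[OF pq True z1(1) z2(1) z_sum] by simp
  next
    case False
    then have pq_ab: "p * q = a * b"
      using mult_le_balanced_split(1)[OF pq] unfolding a_def b_def by simp
    then have "p = a \<or> q = a"
      using mult_le_balanced_split(2)[OF pq] unfolding a_def b_def by simp
    then have "p \<le> b" "q \<le> b" and pa: "p = a \<longleftrightarrow> q = b" and qa: "q = a \<longleftrightarrow> p = b"
      using pq a_add_b a_le_b by auto
    consider (s2) "s2 = 0" | (s1) "s1 = 0" | (both) "1 \<le> s1" "1 \<le> s2"
      by linarith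
    then show ?thesis
    proof cases
      case s2
      then have "z2 = 0" "s1 = t"
        using z2 s by simp_all
      then show ?thesis
        using product_le_one_sided[OF pq_ab \<open>q \<le> b\<close> z1(1)] z_sum pa s2 by simp
    next
      case s1
      then have "z1 = 0" "s2 = t"
        using z1 s by simp_all
      moreover have "q * p = a * b"
        using pq_ab by (simp add: mult.commute)
      ultimately show ?thesis
        using product_le_one_sided[OF _ \<open>p \<le> b\<close> z2(1), of q] z_sum qa s1 by (simp add: mult.commute)
    next
      case both
      then show ?thesis
        using product_lt_two_sided[OF pq_ab \<open>p \<le> b\<close> \<open>q \<le> b\<close> s both z1 z2] by simp
    qed
  qed
  then show "(p + e1 / (l + 1)) * (q + e2 / (l + 1)) \<le> l * l"
    and "(p + e1 / (l + 1)) * (q + e2 / (l + 1)) = l * l \<Longrightarrow>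
      (s2 = 0 \<and> e1 = excess l t \<and> p = a) \<or> (s1 = 0 \<and> e2 = excess l t \<and> q = a)"
    unfolding z1_def z2_def using \<open>0 < l + 1\<close> by auto
qed

lemma host_weight_product:
  assumes "host_graph n P Q K \<rho>" "card P + card Q = m" "card K = t"
  shows "weight_sum l K \<rho> P * weight_sum l K \<rho> Q \<le> 1"
    and "weight_sum l K \<rho> P * weight_sum l K \<rho> Q = 1 \<Longrightarrow>
      \<exists>v. (v \<in> P \<and> card P = a \<or> v \<in> Q \<and> card Q = a) \<and> (\<forall>c\<in>K. \<rho> c = v)"
proof -
  interpret host_graph n P Q K \<rho>
    by fact
  let ?s = "\<lambda>v. card (pendants K \<rho> v)"
  have s_lt: "real (?s v) < l" for v
    using card_pendants_le[of v] assms(3) t_lt_l by linarith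
  define EP where "EP = (\<Sum>v\<in>P. excess l (?s v))"
  define EQ where "EQ = (\<Sum>v\<in>Q. excess l (?s v))"
  have t: "sum ?s P + sum ?s Q = t"
    using sum_card_pendants assms(3) by simp
  then have "real (sum ?s P) < l" "real (sum ?s Q) < l"
    using t_lt_l by linarith+
  then have EP: "0 \<le> EP" "EP \<le> excess l (sum ?s P)" and EQ: "0 \<le> EQ" "EQ \<le> excess l (sum ?s Q)"
    unfolding EP_def EQ_def using sum_excess_le(1) finite_parts s_lt
    by (auto intro!: sum_nonneg excess_nonneg)
  have product_eq: "weight_sum l K \<rho> P * weight_sum l K \<rho> Q =
      (card P + EP / (l + 1)) * (card Q + EQ / (l + 1)) / (l * l)"
    unfolding EP_def EQ_def using finite_parts l_pos s_lt by (simp add: weight_sum_eq_excess)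
  moreover note bound = pendant_product_le[OF assms(2) t EP EQ]
  ultimately show le: "weight_sum l K \<rho> P * weight_sum l K \<rho> Q \<le> 1"
    using l_pos by simp
  have single_root: "\<exists>v\<in>S. \<forall>c\<in>K. \<rho> c = v"
    if S: "S = P \<or> S = Q" "sum ?s S = t" "(\<Sum>v\<in>S. excess l (?s v)) = excess l t" for S
  proof -
    have "finite S"
      using S(1) finite_parts by auto
    then obtain v where "v \<in> S" "?s v = card K"
      using sum_excess_le(2)[of S ?s l] S t_lt_l t_ge assms(3) by auto
    then have "pendants K \<rho> v = K"
      using finite_parts by (intro card_subset_eq) (auto simp: pendants_def)
    then show ?thesis
      using \<open>v \<in> S\<close> unfolding pendants_def by blast
  qed
  assume "weight_sum l K \<rho> P * weight_sum l K \<rho> Q = 1"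
  then have "(card P + EP / (l + 1)) * (card Q + EQ / (l + 1)) = l * l"
    using product_eq l_pos by simp
  then consider "sum ?s Q = 0" "EP = excess l t" "card P = a" | "sum ?s P = 0" "EQ = excess l t" "card Q = a"
    using bound(2) by argo
  then show "\<exists>v. (v \<in> P \<and> card P = a \<or> v \<in> Q \<and> card Q = a) \<and> (\<forall>c\<in>K. \<rho> c = v)"
  proof cases
    case 1
    then show ?thesis
      using single_root[of P] t unfolding EP_def by auto
  next
    case 2
    then show ?thesis
      using single_root[of Q] t unfolding EQ_def by auto
  qed
qed

end

section \<open>The extremal graph\<close>

context critical_root
begin

lemma TK_host:
  shows "TK (m + t) (t + 2) = host_edges {0..<a} {a..<m} {m..<m + t} (\<lambda>_. 0)"
    and "host_graph (m + t) {0..<a} {a..<m} {m..<m + t} (\<lambda>_. 0)"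
proof -
  have "2 \<le> m"
    using m_ge by simp
  show "TK (m + t) (t + 2) = host_edges {0..<a} {a..<m} {m..<m + t} (\<lambda>_. 0)"
    unfolding a_def by (rule TK_eq_host_edges[OF \<open>2 \<le> m\<close>])
  show "host_graph (m + t) {0..<a} {a..<m} {m..<m + t} (\<lambda>_. 0)"
    unfolding a_def by (rule host_graph_TK[OF \<open>2 \<le> m\<close>])
qed

lemma TK_weight_product:
  "weight_sum l {m..<m + t} (\<lambda>_. 0) {0..<a} * weight_sum l {m..<m + t} (\<lambda>_. 0) {a..<m} = 1"
proof -
  let ?K = "{m..<m + t}"
  have "pendants ?K (\<lambda>_. 0) v = (if v = 0 then ?K else {})" for v
    unfolding pendants_def by auto
  then have pendants: "excess l (card (pendants ?K (\<lambda>_. 0) v)) = (if v = 0 then excess l t else 0)"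
    and s_lt: "real (card (pendants ?K (\<lambda>_. 0) v)) < l" for v
    using t_lt_l l_pos by simp_all
  have "0 \<in> {0..<a}" "0 \<notin> {a..<m}"
    using a_ge by auto
  then have "(\<Sum>v\<in>{0..<a}. excess l (card (pendants ?K (\<lambda>_. 0) v))) = excess l t"
    and "(\<Sum>v\<in>{a..<m}. excess l (card (pendants ?K (\<lambda>_. 0) v))) = 0"
    unfolding pendants by simp_all
  then have "weight_sum l ?K (\<lambda>_. 0) {0..<a} * weight_sum l ?K (\<lambda>_. 0) {a..<m} =
      (a + excess l t / (l + 1)) / l * (b / l)"
    using weight_sum_eq_excess[OF _ l_pos s_lt] b_def by simp
  also have "\<dots> = ((a + excess l t / (l + 1)) * b) / (l * l)"
    by simp
  also have "(a + excess l t / (l + 1)) * b = l * l"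
    unfolding l_sq by (simp add: algebra_simps)
  finally show ?thesis
    using l_pos by simp
qed

lemma lambda_G_TK: "lambda_G (m + t) (TK (m + t) (t + 2)) = l"
proof -
  interpret TK: host_graph "m + t" "{0..<a}" "{a..<m}" "{m..<m + t}" "\<lambda>_. 0"
    by (rule TK_host(2))
  have card_lt: "real (card {m..<m + t}) < l" and "0 < m + t"
    using t_lt_l m_ge by auto
  have "l \<le> lambda_G (m + t) (TK (m + t) (t + 2))"
    unfolding TK_host(1) by (rule TK.lambda_G_host_ge[OF card_lt \<open>0 < m + t\<close> TK_weight_product])
  moreover have "lambda_G (m + t) (TK (m + t) (t + 2)) \<le> l"
    unfolding TK_host(1)
    by (rule TK.lambda_G_subgraph_host(1)[OF card_lt \<open>0 < m + t\<close> order.refl TK_weight_product[THEN eq_refl]])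
  ultimately show ?thesis
    by simp
qed

lemma host_iso_TK:
  assumes "host_graph (m + t) P Q K \<rho>" "card P + card Q = m" "card K = t"
    and "weight_sum l K \<rho> P * weight_sum l K \<rho> Q = 1"
  shows "graph_iso (m + t) (host_edges P Q K \<rho>) (TK (m + t) (t + 2))"
proof -
  have iso: "graph_iso (m + t) (host_edges P' Q' K \<rho>) (TK (m + t) (t + 2))"
    if "host_graph (m + t) P' Q' K \<rho>" "v \<in> P'" "card P' = a" "card Q' = b" "\<forall>c\<in>K. \<rho> c = v"
    for P' Q' v
  proof -
    interpret host_graph "m + t" P' Q' K \<rho>
      by (rule that(1))
    show ?thesis
      unfolding TK_host(1) using that a_ge b_def assms(3)
      by (intro graph_iso_single_root[OF TK_host(2), of v 0]) auto
  qed
  obtain v where v: "v \<in> P \<and> card P = a \<or> v \<in> Q \<and> card Q = a" and root: "\<forall>c\<in>K. \<rho> c = v"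
    using host_weight_product(2)[OF assms] by blast
  show ?thesis
  proof (cases "v \<in> P \<and> card P = a")
    case True
    then show ?thesis
      using iso[OF assms(1) _ _ _ root] assms(2) a_add_b by simp
  next
    case False
    then have "v \<in> Q" "card Q = a" "card P = b"
      using v assms(2) a_add_b by auto
    then show ?thesis
      using iso[OF host_graph_swap[OF assms(1)] _ _ _ root] unfolding host_edges_swap[of Q P] by simp
  qed
qed

end

section \<open>Graphs with suspended subgraphs\<close>

lemma G_star_subgraph_host:
  assumes "G_star n r E"
  obtains P Q K \<rho> where "host_graph n P Q K \<rho>" "E \<subseteq> host_edges P Q K \<rho>" "card K = r - 2"
proof -
  obtain VB EB and s :: nat and VG :: "nat \<Rightarrow> nat set" and EG :: "nat \<Rightarrow> nat set set"
    where B: "graph_on VB EB" "bipartite VB EB"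
    and G: "\<forall>i<s. graph_on (VG i) (EG i) \<and> card (VG i \<inter> VB) = 1"
    and disj: "\<forall>i<s. \<forall>j<s. i \<noteq> j \<longrightarrow> (VG i - VB) \<inter> (VG j - VB) = {}"
    and V: "{0..<n} = VB \<union> (\<Union>i<s. VG i)" and E: "E = EB \<union> (\<Union>i<s. EG i)"
    and card_sum: "(\<Sum>i<s. card (VG i - VB)) = r - 2"
    using assms unfolding G_star_def by blast
  obtain X where "X \<subseteq> VB" and X: "\<And>e. e \<in> EB \<Longrightarrow> card (e \<inter> X) = 1"
    using B(2) unfolding bipartite_def by blast
  define vi where "vi i = (THE v. VG i \<inter> VB = {v})" for i
  have vi: "VG i \<inter> VB = {vi i}" if "i < s" for i
  proof -
    have "card (VG i \<inter> VB) = Suc 0"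
      using G that by simp
    then obtain v where v: "VG i \<inter> VB = {v}"
      unfolding card_1_singleton_iff by blast
    then have "vi i = v"
      unfolding vi_def by (intro the_equality) auto
    then show ?thesis
      using v by simp
  qed
  define K where "K = {0..<n} - VB"
  have unique_part: "\<exists>!i. i < s \<and> c \<in> VG i" if "c \<in> K" for c
  proof -
    have "c \<notin> VB" "c \<in> (\<Union>i<s. VG i)"
      using that V unfolding K_def by auto
    then obtain i where "i < s" "c \<in> VG i"
      by blast
    moreover have "j = i" if "j < s" "c \<in> VG j" for j
      using disj \<open>i < s\<close> \<open>c \<in> VG i\<close> \<open>c \<notin> VB\<close> that by blast
    ultimately show ?thesis
      by blast
  qed
  define \<rho> where "\<rho> c = vi (THE i. i < s \<and> c \<in> VG i)" for c
  have root: "\<rho> c = vi i" if "c \<in> K" "i < s" "c \<in> VG i" for c i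
    unfolding \<rho>_def using the1_equality[OF unique_part[OF that(1)]] that by simp
  have "host_graph n X (VB - X) K \<rho>"
  proof
    show "X \<inter> (VB - X) = {}" "X \<inter> K = {}" "(VB - X) \<inter> K = {}" "X \<union> (VB - X) \<union> K = {0..<n}"
      using \<open>X \<subseteq> VB\<close> V unfolding K_def by auto
    fix c assume "c \<in> K"
    then obtain i where "i < s" "c \<in> VG i"
      using unique_part by blast
    then show "\<rho> c \<in> X \<union> (VB - X)"
      using root[OF \<open>c \<in> K\<close>] vi by auto
  qed
  moreover have "E \<subseteq> host_edges X (VB - X) K \<rho>"
  proof
    fix e assume "e \<in> E"
    then consider "e \<in> EB" | i where "i < s" "e \<in> EG i"
      unfolding E by blast
    then show "e \<in> host_edges X (VB - X) K \<rho>"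
    proof cases
      case 1
      then obtain u v where "e = {u, v}" "u \<noteq> v" "u \<in> VB" "v \<in> VB"
        using B(1) unfolding graph_on_def by blast
      moreover have "card ({u, v} \<inter> X) = 1"
        using X[OF 1] \<open>e = {u, v}\<close> by simp
      then have "u \<in> X \<and> v \<in> VB - X \<or> u \<in> VB - X \<and> v \<in> X"
        using \<open>u \<noteq> v\<close> \<open>u \<in> VB\<close> \<open>v \<in> VB\<close> by (cases "u \<in> X"; cases "v \<in> X") auto
      then show ?thesis
        unfolding \<open>e = {u, v}\<close> mem_host_edges_iff by blast
    next
      case 2
      then obtain u w where "e = {u, w}" "u \<noteq> w" "u \<in> VG i" "w \<in> VG i"
        using G unfolding graph_on_def by blast
      have hub: "x \<in> VB \<longleftrightarrow> x = vi i" if "x \<in> VG i" for x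
        using vi[OF \<open>i < s\<close>] that by blast
      have pendant: "x \<in> K \<and> \<rho> x = vi i" if "x \<in> VG i" "x \<notin> VB" for x
      proof -
        have "x < n"
          using that \<open>i < s\<close> V by auto
        then show ?thesis
          using root[of x i] that \<open>i < s\<close> unfolding K_def by simp
      qed
      show ?thesis
        unfolding \<open>e = {u, w}\<close> mem_host_edges_iff
        using hub pendant \<open>u \<in> VG i\<close> \<open>w \<in> VG i\<close> \<open>u \<noteq> w\<close> by metis
    qed
  qed
  moreover have "card K = r - 2"
  proof -
    have "K = (\<Union>i<s. VG i - VB)"
      unfolding K_def using V by auto
    moreover have "finite (VG i)" if "i < s" for i
      using G that unfolding graph_on_def by auto
    then have "card (\<Union>i<s. VG i - VB) = (\<Sum>i<s. card (VG i - VB))"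
      using disj by (intro card_UN_disjoint) auto
    ultimately show ?thesis
      using card_sum by simp
  qed
  ultimately show thesis
    by (rule that)
qed

theorem lemma2p7:
  fixes k n r :: nat and E :: "nat set set"
  assumes "k \<ge> 1" and "n \<ge> 100 * k" and "3 \<le> r" and "r \<le> 10 * k"
    and "G_star n r E"
  shows "lambda_G n E \<le> lambda_G n (TK n r) \<and>
         (lambda_G n E = lambda_G n (TK n r) \<longleftrightarrow> graph_iso n E (TK n r))"
proof -
  define t where "t = r - 2"
  define m where "m = n - t"
  have n: "n = m + t" and r: "r = t + 2" and "90 \<le> m" "1 \<le> t" "9 * t < m"
    using assms(1-4) unfolding t_def m_def by linarith+
  obtain l where "critical_root m t (m div 2) (m - m div 2) l"
    using critical_root_exists[OF \<open>90 \<le> m\<close> \<open>1 \<le> t\<close> \<open>9 * t < m\<close>] .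
  then interpret critical_root m t "m div 2" "m - m div 2" l .
  obtain P Q K \<rho> where H: "host_graph n P Q K \<rho>" and "E \<subseteq> host_edges P Q K \<rho>" "card K = t"
    using G_star_subgraph_host[OF assms(5)] unfolding t_def by blast
  interpret host_graph n P Q K \<rho>
    by (rule H)
  have "card P + card Q = m"
    using card_parts \<open>card K = t\<close> n by simp
  have "real (card K) < l" "0 < n"
    using \<open>card K = t\<close> t_lt_l n m_ge by auto
  note bound = lambda_G_subgraph_host[OF this \<open>E \<subseteq> host_edges P Q K \<rho>\<close>
      host_weight_product(1)[OF H \<open>card P + card Q = m\<close> \<open>card K = t\<close>]]
  have "lambda_G n (TK n r) = l"
    using lambda_G_TK unfolding n r .
  moreover have "lambda_G n E \<le> l"
    by (rule bound(1))
  moreover have "graph_iso n E (TK n r)" if "lambda_G n E = l"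
    using bound(2)[OF that] host_iso_TK[OF H[unfolded n] \<open>card P + card Q = m\<close> \<open>card K = t\<close>]
    unfolding n r by simp
  moreover have "lambda_G n (TK n r) \<le> lambda_G n E" if "graph_iso n E (TK n r)"
    using lambda_G_le_of_graph_iso[OF \<open>0 < n\<close> that] .
  ultimately show ?thesis
    by auto
qed

end
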